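(* Let $(\gamma,\delta)$ be any pair of partitions. For each $1\le j\le l(\delta)$ let $$d_j=\#\{i:\ 2\le i\le l(\gamma),\ \gamma_i>\delta_j\}-\#\{i<j:\ \delta_i\text{ is unbalanced}\}.$$ Then $d_j\ge0$ for every $j$.
   Context: A partition is a finite nonincreasing sequence of positive integers (possibly empty); $l(\lambda)$ is its number of parts. Balanced parts: let $(\gamma,\delta)$ be a pair of partitions, with the convention $\gamma_j=0$ for $j>l(\gamma)$. The parts $\delta_1,\delta_2,\dots,\delta_{l(\delta)}$ are classified as balanced or unbalanced recursively in increasing order of index: $\delta_i$ is balanced if and only if $\gamma_{i+1}\le\delta_i$ and the number of indices $j$ with $2\le j\le l(\gamma)$ and $\gamma_j>\delta_i$ equals the number of indices $j<i$ for which $\delta_j$ is unbalanced; otherwise $\delta_i$ is unbalanced. *)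

theory Defs
  imports Main
begin

definition is_partition :: "nat list \<Rightarrow> bool" where
  "is_partition lam \<longleftrightarrow> sorted_wrt (\<ge>) lam \<and> (\<forall>x\<in>set lam. 0 < x)"

text \<open>1-indexed part, with value 0 beyond the length (and at index 0).\<close>
definition part :: "nat list \<Rightarrow> nat \<Rightarrow> nat" where
  "part lam i = (if 1 \<le> i \<and> i \<le> length lam then lam ! (i - 1) else 0)"

definition cnt_big :: "nat list \<Rightarrow> nat \<Rightarrow> nat" where
  "cnt_big gam x = card {j. 2 \<le> j \<and> j \<le> length gam \<and> part gam j > x}"

fun nunb :: "nat list \<Rightarrow> nat list \<Rightarrow> nat \<Rightarrow> nat" where
  "nunb gam del 0 = 0"
| "nunb gam del (Suc i) = nunb gam del i +
     (if 1 \<le> i \<and> \<not> (part gam (i + 1) \<le> part del i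
                        \<and> cnt_big gam (part del i) = nunb gam del i) then 1 else 0)"

definition balanced :: "nat list \<Rightarrow> nat list \<Rightarrow> nat \<Rightarrow> bool" where
  "balanced gam del i \<longleftrightarrow> part gam (i + 1) \<le> part del i \<and> cnt_big gam (part del i) = nunb gam del i"

lemma nunb_Suc_balanced:
  "nunb gam del (Suc i) = nunb gam del i + (if 1 \<le> i \<and> \<not> balanced gam del i then 1 else 0)"
  by (simp add: balanced_def)

end

theory Submission
  imports Defs
begin

(* The claim d_j >= 0 is the invariant  nunb gam del j <= cnt_big gam (part del j)
   for all j >= 1, proved by induction on j.  Three facts drive the step j -> j+1:
   - parts of a partition are antitone in the index (also past its length, where they
     are 0), and cnt_big gam x is antitone in x; so cnt_big gam (part del j) can only
     grow with j;
   - at most j - 1 of delta_1, ..., delta_(j-1) are unbalanced, so nunb gam del j <= j - 1;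
   - if gamma_(j+1) > x then gamma_2, ..., gamma_(j+1) all exceed x, so cnt_big gam x >= j.
   If delta_j is balanced the count of unbalanced parts does not change; if it fails the
   counting condition, the invariant was strict at j; if it fails gamma_(j+1) <= delta_j,
   the third fact applies to x = delta_(j+1) <= delta_j. *)

lemma nunb_le: "nunb gam del j \<le> j - 1"
proof (induction j)
  case 0
  then show ?case by simp
next
  case (Suc i)
  then show ?case by (cases "i = 0") auto
qed

lemma cnt_big_antitone:
  assumes "x \<le> y"
  shows "cnt_big gam y \<le> cnt_big gam x"
  unfolding cnt_big_def
  using assms by (intro card_mono) (auto simp: finite_nat_set_iff_bounded_le)

text \<open>The parts of a partition are nonincreasing in the (1-based) index; this holds for
  all indices since parts beyond the length are \<open>0\<close>.\<close>
lemma part_antitone: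
  assumes "is_partition lam" and "1 \<le> i" and "i \<le> k"
  shows "part lam k \<le> part lam i"
proof (cases "k \<le> length lam \<and> i < k")
  case True
  have "sorted_wrt (\<ge>) lam"
    using assms(1) by (simp add: is_partition_def)
  moreover have "i - 1 < k - 1" and "k - 1 < length lam"
    using True assms(2) by auto
  ultimately have "lam ! (k - 1) \<le> lam ! (i - 1)"
    by (rule sorted_wrt_nth_less)
  then show ?thesis
    using True assms(2) by (simp add: part_def)
next
  case False
  then show ?thesis
    using assms(3) by (auto simp: part_def)
qed

text \<open>If \<open>\<gamma>\<^sub>j\<^sub>+\<^sub>1 > x\<close>, then \<open>\<gamma>\<^sub>2, \<dots>, \<gamma>\<^sub>j\<^sub>+\<^sub>1\<close> all exceed \<open>x\<close>, giving at least \<open>j\<close> large parts.\<close>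
lemma cnt_big_ge_index:
  assumes "is_partition gam" and "x < part gam (j + 1)"
  shows "j \<le> cnt_big gam x"
proof -
  have len: "j + 1 \<le> length gam"
    using assms(2) by (auto simp: part_def split: if_splits)
  have "{2..j + 1} \<subseteq> {i. 2 \<le> i \<and> i \<le> length gam \<and> x < part gam i}"
  proof
    fix i
    assume i: "i \<in> {2..j + 1}"
    then have "part gam (j + 1) \<le> part gam i"
      by (intro part_antitone[OF assms(1)]) auto
    then show "i \<in> {i. 2 \<le> i \<and> i \<le> length gam \<and> x < part gam i}"
      using i len assms(2) by auto
  qed
  then have "card {2..j + 1} \<le> cnt_big gam x"
    unfolding cnt_big_def by (intro card_mono) (auto simp: finite_nat_set_iff_bounded_le)
  then show ?thesis by simp
qed

lemma nunb_le_cnt_big: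
  assumes gam: "is_partition gam" and del: "is_partition del" and "1 \<le> j"
  shows "nunb gam del j \<le> cnt_big gam (part del j)"
  using \<open>1 \<le> j\<close>
proof (induction j rule: nat_induct_at_least)
  case base
  then show ?case by simp
next
  case (Suc j)
  have IH: "nunb gam del j \<le> cnt_big gam (part del j)"
    by (rule Suc.IH)
  have next_part: "part del (Suc j) \<le> part del j"
    using Suc.hyps by (intro part_antitone[OF del]) auto
  then have grows: "cnt_big gam (part del j) \<le> cnt_big gam (part del (Suc j))"
    by (rule cnt_big_antitone)
  consider (balanced) "balanced gam del j"
    | (interlacing_fails) "part del j < part gam (j + 1)"
    | (count_fails) "cnt_big gam (part del j) \<noteq> nunb gam del j"
    unfolding balanced_def by linarith
  then show ?case
  proof cases
    case balanced
    then show ?thesis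
      unfolding nunb_Suc_balanced using IH grows by simp
  next
    case interlacing_fails
    then have unbalanced: "\<not> balanced gam del j"
      by (simp add: balanced_def)
    have "j \<le> cnt_big gam (part del (Suc j))"
      using interlacing_fails next_part by (intro cnt_big_ge_index[OF gam]) simp
    moreover have "nunb gam del j \<le> j - 1"
      by (rule nunb_le)
    ultimately show ?thesis
      unfolding nunb_Suc_balanced using unbalanced Suc.hyps by simp
  next
    case count_fails
    then show ?thesis
      unfolding nunb_Suc_balanced balanced_def using IH grows Suc.hyps by simp
  qed
qed

theorem mainTheorem4:
  fixes gam del :: "nat list" and j :: nat
  assumes "is_partition gam" and "is_partition del"
    and "1 \<le> j" and "j \<le> length del"
  shows "int (cnt_big gam (part del j)) - int (nunb gam del j) \<ge> 0"
  using nunb_le_cnt_big[OF assms(1-3)] by simp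

end
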